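(* The $3$-uniform hypergraphs $O_R$ and $O_B$ are both opaque; i.e., the spectral ranking of $O_R$ differs from that of $\partial^*O_R$, and the spectral ranking of $O_B$ differs from that of $\partial^*O_B$. (Here $\partial^*O_R=\partial^*O_B$; in this multigraph the principal eigenvector takes equal values at $t$ and $b$, while the principal eigenvector $y$ of $O_R$ satisfies $y_t>y_b$.)
   Context: $O_R$ is the $3$-uniform hypergraph on vertex set $\{t,b,p,q,r,s,u\}$ with edges $\{t,p,q\},\{t,r,s\},\{b,q,r\},\{b,p,s\},\{u,p,q\}$; $O_B$ is the $3$-uniform hypergraph on the same vertex set with edges $\{t,p,r\},\{t,p,s\},\{b,p,q\},\{b,r,s\},\{u,p,q\}$. For a connected $k$-uniform hypergraph $H=([n],E)$, writing $x^e=\prod_{v\in e}x_v$, its principal eigenvector is the unique strictly positive $y$ with $\|y\|_k=1$ and $\rho\, y_i^{k-1}=\sum_{e\ni i}y^{e\setminus\{i\}}$ for all $i$, where $\rho=\max_{\|z\|_k^k=1}k\sum_{e\in E}z^e$. The clique-shadow $\partial^*H$ is the multigraph on the same vertices in which $\{u,v\}$ has multiplicity $\mu(uv)=|\{e\in E:u,v\in e\}|$; its principal eigenvector is the positive Perron eigenvector of its adjacency matrix (entries $\mu(uv)$), normalized to unit $2$-norm. The spectral ranking of a (hyper)graph is the ordering of its vertices by decreasing value of the principal eigenvector, tied vertices sharing a rank. A hypergraph is opaque if its spectral ranking differs from that of its clique-shadow. *)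

theory Defs
  imports Main Complex_Main
begin

datatype vtx = T | B | P | Q | R | S | U

lemma UNIV_vtx: "(UNIV :: vtx set) = {T, B, P, Q, R, S, U}"
  by (auto intro: vtx.exhaust)

instance vtx :: finite
  by standard (simp add: UNIV_vtx)

definition O_R :: "vtx set set" where
  "O_R = {{T,P,Q}, {T,R,S}, {B,Q,R}, {B,P,S}, {U,P,Q}}"

definition O_B :: "vtx set set" where
  "O_B = {{T,P,R}, {T,P,S}, {B,P,Q}, {B,R,S}, {U,P,Q}}"

definition hyp_rho :: "nat \<Rightarrow> ('a::finite) set set \<Rightarrow> real" where
  "hyp_rho k E = Sup {real k * (\<Sum>e\<in>E. \<Prod>v\<in>e. z v) | z :: 'a \<Rightarrow> real.
                        (\<Sum>i\<in>UNIV. \<bar>z i\<bar> ^ k) = 1}"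

definition hyp_evec :: "nat \<Rightarrow> ('a::finite) set set \<Rightarrow> ('a \<Rightarrow> real)" where
  "hyp_evec k E = (THE y. (\<forall>i. y i > 0) \<and> (\<Sum>i\<in>UNIV. \<bar>y i\<bar> ^ k) = 1 \<and>
      (\<forall>i. hyp_rho k E * y i ^ (k - 1) = (\<Sum>e\<in>{e\<in>E. i \<in> e}. \<Prod>v\<in>e - {i}. y v)))"

definition shadow_adj :: "('a::finite) set set \<Rightarrow> 'a \<Rightarrow> 'a \<Rightarrow> real" where
  "shadow_adj E x y = (if x = y then 0 else real (card {e\<in>E. x \<in> e \<and> y \<in> e}))"

definition is_eigenpair :: "(('a::finite) \<Rightarrow> 'a \<Rightarrow> real) \<Rightarrow> real \<Rightarrow> ('a \<Rightarrow> real) \<Rightarrow> bool" where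
  "is_eigenpair A lam x \<longleftrightarrow> x \<noteq> (\<lambda>_. 0) \<and> (\<forall>i. (\<Sum>j\<in>UNIV. A i j * x j) = lam * x i)"

definition perron_root :: "(('a::finite) \<Rightarrow> 'a \<Rightarrow> real) \<Rightarrow> real" where
  "perron_root A = (GREATEST lam. \<exists>x. is_eigenpair A lam x)"

definition shadow_evec :: "('a::finite) set set \<Rightarrow> ('a \<Rightarrow> real)" where
  "shadow_evec E = (THE x. (\<forall>i. x i > 0) \<and> (\<Sum>i\<in>UNIV. x i ^ 2) = 1 \<and>
      is_eigenpair (shadow_adj E) (perron_root (shadow_adj E)) x)"

text \<open>The spectral ranking (ordering by decreasing value, ties sharing a rank) is determined by,
  and determines, the weak order "i is ranked at least as high as j".\<close>
definition spectral_ranking :: "('a \<Rightarrow> real) \<Rightarrow> ('a \<times> 'a) set" where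
  "spectral_ranking y = {(i, j). y j \<le> y i}"

definition opaque :: "nat \<Rightarrow> ('a::finite) set set \<Rightarrow> bool" where
  "opaque k E \<longleftrightarrow> spectral_ranking (hyp_evec k E) \<noteq> spectral_ranking (shadow_evec E)"

end

theory Submission
  imports Defs "HOL-Analysis.Analysis"
begin

text \<open>Both principal eigenvectors are instances of one object. For a connected \<open>k\<close>-uniform
  hypergraph with positive edge weights \<open>c\<close>, a maximiser of the Lagrangian
  \<open>L z = (\<Sum>e. c e * (\<Prod>v\<in>e. z v))\<close> on the unit sphere of the \<open>k\<close>-norm is strictly positive
  (by connectivity) and satisfies the Lagrange condition \<open>\<partial>\<^sub>i L y = \<rho> * y i ^ (k - 1)\<close>, and by
  a minimal-ratio argument there is only one such normalised positive vector. The clique-shadow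
  is the weighted \<open>2\<close>-uniform case, with the pair multiplicities as weights.

  Positive test vectors then locate the eigenvector \<open>y\<close> (Collatz--Wielandt): a vector \<open>w\<close>
  with \<open>\<partial>\<^sub>i L w < r * w i ^ (k - 1)\<close> everywhere shows \<open>\<rho> < r\<close>, and a vector \<open>z\<close> with
  \<open>r * z i ^ (k - 1) \<le> \<partial>\<^sub>i L z\<close> at every vertex except \<open>a\<close> forces the minimum of \<open>y / z\<close>
  to be attained at \<open>a\<close>, so that \<open>z a < z b\<close> implies \<open>y a < y b\<close>. Rational test vectors give
  \<open>y\<^sub>b < y\<^sub>t\<close> in \<open>O\<^sub>R\<close> and \<open>y\<^sub>q < y\<^sub>r\<close> in \<open>O\<^sub>B\<close>, whereas in the shadow of \<open>O\<^sub>R\<close> the rows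
  of \<open>t\<close> and \<open>b\<close> coincide, and in the shadow of \<open>O\<^sub>B\<close> a test vector gives \<open>x\<^sub>r < x\<^sub>q\<close>.\<close>

abbreviation sum_abs_pow :: "nat \<Rightarrow> ('a::finite \<Rightarrow> real) \<Rightarrow> real" where
  "sum_abs_pow k z \<equiv> \<Sum>i\<in>UNIV. \<bar>z i\<bar> ^ k"

lemma sum_abs_pow_upd:
  "sum_abs_pow k (z(i := a)) = sum_abs_pow k z - \<bar>z i\<bar> ^ k + \<bar>a\<bar> ^ k"
proof -
  have "sum_abs_pow k (z(i := a)) = (\<Sum>j\<in>UNIV. \<bar>z j\<bar> ^ k + (if j = i then \<bar>a\<bar> ^ k - \<bar>z i\<bar> ^ k else 0))"
    by (rule sum.cong) auto
  then show ?thesis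
    by (simp add: sum.distrib)
qed

lemma sum_abs_pow_scale:
  "sum_abs_pow k (\<lambda>v. a * z v) = \<bar>a\<bar> ^ k * sum_abs_pow k z"
  by (simp add: abs_mult power_mult_distrib sum_distrib_left)

lemma ex_argmin:
  fixes f :: "'a::finite \<Rightarrow> 'b::linorder"
  shows "\<exists>i. \<forall>j. f i \<le> f j"
  using arg_min_if_finite(2)[of UNIV f] by (metis finite UNIV_I UNIV_not_empty not_le)

lemma ex_argmax:
  fixes f :: "'a::finite \<Rightarrow> real"
  shows "\<exists>i. \<forall>j. f j \<le> f i"
  using ex_argmin[of "\<lambda>j. - f j"] by auto

lemma nonpos_if_le_power:
  fixes p C :: real
  assumes "0 < n" and "\<And>t. 0 < t \<Longrightarrow> p \<le> C * t ^ n"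
  shows "p \<le> 0"
proof -
  have ev: "eventually (\<lambda>t. p \<le> C * t ^ n) (at_right 0)"
    using assms(2) unfolding eventually_at_right_field by (intro exI[of _ 1]) auto
  have lim: "((\<lambda>t. C * t ^ n) \<longlongrightarrow> 0) (at_right 0)"
    using assms(1) by (auto intro!: tendsto_eq_intros)
  show ?thesis
    using tendsto_le[OF trivial_limit_at_right_real lim tendsto_const ev] .
qed

lemma sphere_maximum_exists:
  fixes g :: "('a::finite \<Rightarrow> real) \<Rightarrow> real"
  assumes "0 < k" and cont: "continuous_on UNIV (\<lambda>x::real^'a. g (vec_nth x))"
  obtains w where "sum_abs_pow k w = 1" and "\<And>z. sum_abs_pow k z = 1 \<Longrightarrow> g z \<le> g w"
proof -
  define K where "K = {x::real^'a. sum_abs_pow k (vec_nth x) = 1}"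
  have "closed K"
    unfolding K_def by (intro closed_Collect_eq continuous_intros)
  moreover have "K \<subseteq> cbox (-1) 1"
  proof
    fix x assume "x \<in> K"
    have "\<bar>x $ i\<bar> \<le> 1" for i
    proof -
      have "\<bar>x $ i\<bar> ^ k \<le> sum_abs_pow k (vec_nth x)"
        by (rule member_le_sum) auto
      with \<open>x \<in> K\<close> \<open>0 < k\<close> show ?thesis
        by (simp add: K_def power_le_one_iff)
    qed
    then show "x \<in> cbox (-1) 1"
      by (auto simp: mem_box_cart abs_le_iff)
  qed
  ultimately have "compact K"
    by (metis bounded_cbox bounded_subset compact_eq_bounded_closed)
  moreover have "axis undefined 1 \<in> K"
    using \<open>0 < k\<close>
    by (simp add: K_def axis_def if_distrib[of "\<lambda>x. \<bar>x\<bar> ^ k"] if_distrib[of "\<lambda>x. x ^ k"] zero_power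
        cong: if_cong)
  moreover have "continuous_on K (g \<circ> vec_nth)"
    using continuous_on_subset[OF cont] by (simp add: comp_def)
  ultimately obtain x where "x \<in> K" and x_max: "\<And>y. y \<in> K \<Longrightarrow> g (vec_nth y) \<le> g (vec_nth x)"
    using continuous_attains_sup[of K "g \<circ> vec_nth"] by auto
  show thesis
  proof
    show "sum_abs_pow k (vec_nth x) = 1"
      using \<open>x \<in> K\<close> by (simp add: K_def)
    fix z :: "'a \<Rightarrow> real"
    assume "sum_abs_pow k z = 1"
    then have "vec_lambda z \<in> K"
      by (simp add: K_def)
    then show "g z \<le> g (vec_nth x)"
      using x_max[of "vec_lambda z"] by (simp add: vec_lambda_inverse)
  qed
qed

definition lagrangian :: "('a set \<Rightarrow> real) \<Rightarrow> 'a set set \<Rightarrow> ('a \<Rightarrow> real) \<Rightarrow> real" where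
  "lagrangian c E z = (\<Sum>e\<in>E. c e * (\<Prod>v\<in>e. z v))"

definition lagrangian_partial :: "('a set \<Rightarrow> real) \<Rightarrow> 'a set set \<Rightarrow> ('a \<Rightarrow> real) \<Rightarrow> 'a \<Rightarrow> real" where
  "lagrangian_partial c E z i = (\<Sum>e\<in>{e\<in>E. i \<in> e}. c e * (\<Prod>v\<in>e - {i}. z v))"

lemma lagrangian_split:
  fixes E :: "'a::finite set set"
  shows "lagrangian c E z =
    (\<Sum>e\<in>{e\<in>E. i \<notin> e}. c e * (\<Prod>v\<in>e. z v)) + z i * lagrangian_partial c E z i"
proof -
  have "(\<Sum>e\<in>{e\<in>E. i \<in> e}. c e * (\<Prod>v\<in>e. z v)) = z i * lagrangian_partial c E z i"
    unfolding lagrangian_partial_def sum_distrib_left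
    by (rule sum.cong) (auto simp: prod.remove)
  moreover have "E = {e\<in>E. i \<notin> e} \<union> {e\<in>E. i \<in> e}"
    by blast
  then have "lagrangian c E z =
      (\<Sum>e\<in>{e\<in>E. i \<notin> e}. c e * (\<Prod>v\<in>e. z v)) + (\<Sum>e\<in>{e\<in>E. i \<in> e}. c e * (\<Prod>v\<in>e. z v))"
    unfolding lagrangian_def by (metis (no_types, lifting) finite sum.union_disjoint disjoint_iff mem_Collect_eq)
  ultimately show ?thesis
    by simp
qed

lemma lagrangian_partial_upd_self:
  "lagrangian_partial c E (z(i := a)) i = lagrangian_partial c E z i"
  unfolding lagrangian_partial_def by (intro sum.cong prod.cong) auto

lemma lagrangian_upd:
  fixes E :: "'a::finite set set"
  shows "lagrangian c E (z(i := a)) = lagrangian c E z + (a - z i) * lagrangian_partial c E z i"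
proof -
  have "(\<Prod>v\<in>e. (z(i := a)) v) = (\<Prod>v\<in>e. z v)" if "i \<notin> e" for e
    using that by (intro prod.cong) auto
  then have "(\<Sum>e\<in>{e\<in>E. i \<notin> e}. c e * (\<Prod>v\<in>e. (z(i := a)) v)) =
      (\<Sum>e\<in>{e\<in>E. i \<notin> e}. c e * (\<Prod>v\<in>e. z v))"
    by (intro sum.cong) auto
  then have "lagrangian c E (z(i := a)) =
      (\<Sum>e\<in>{e\<in>E. i \<notin> e}. c e * (\<Prod>v\<in>e. z v)) + a * lagrangian_partial c E z i"
    using lagrangian_split[of c E "z(i := a)" i]
    by (simp only: lagrangian_partial_upd_self fun_upd_same)
  then show ?thesis
    by (simp only: lagrangian_split[of c E z i]) (simp add: algebra_simps)
qed

lemma lagrangian_partial_mono: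
  assumes "\<And>e. e \<in> E \<Longrightarrow> 0 \<le> c e" "\<And>v. 0 \<le> x v" "\<And>v. x v \<le> y v"
  shows "lagrangian_partial c E x i \<le> lagrangian_partial c E y i"
  unfolding lagrangian_partial_def using assms by (intro sum_mono mult_left_mono prod_mono) auto

definition hconnected :: "'a set set \<Rightarrow> bool" where
  "hconnected E \<longleftrightarrow> (\<forall>Z. Z \<noteq> {} \<and> (\<forall>e\<in>E. e \<inter> Z \<noteq> {} \<longrightarrow> e \<subseteq> Z) \<longrightarrow> Z = UNIV)"

lemma hconnectedD:
  assumes "hconnected E" "Z \<noteq> {}" "\<And>e. e \<in> E \<Longrightarrow> e \<inter> Z \<noteq> {} \<Longrightarrow> e \<subseteq> Z"
  shows "Z = UNIV"
  using assms unfolding hconnected_def by blast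

section \<open>Perron--Frobenius theory for connected uniform hypergraphs\<close>

locale weighted_hypergraph =
  fixes k :: nat and E :: "'a::finite set set" and c :: "'a set \<Rightarrow> real"
  assumes k_pos: "0 < k"
    and uniform: "e \<in> E \<Longrightarrow> card e = k"
    and weight_pos: "e \<in> E \<Longrightarrow> 0 < c e"
    and connected: "hconnected E"
begin

definition lagrangian_maximizer :: "('a \<Rightarrow> real) \<Rightarrow> bool" where
  "lagrangian_maximizer w \<longleftrightarrow> (\<forall>i. 0 \<le> w i) \<and> sum_abs_pow k w = 1 \<and>
     (\<forall>z. lagrangian c E z \<le> lagrangian c E w * sum_abs_pow k z)"

definition pos_eigvec :: "real \<Rightarrow> ('a \<Rightarrow> real) \<Rightarrow> bool" where
  "pos_eigvec \<rho> y \<longleftrightarrow> (\<forall>i. 0 < y i) \<and> (\<forall>i. lagrangian_partial c E y i = \<rho> * y i ^ (k - 1))"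

lemma weight_nonneg: "e \<in> E \<Longrightarrow> 0 \<le> c e"
  using weight_pos less_imp_le by blast

lemma lagrangian_scale: "lagrangian c E (\<lambda>v. a * z v) = a ^ k * lagrangian c E z"
  unfolding lagrangian_def sum_distrib_left
  by (intro sum.cong) (simp_all add: prod.distrib uniform mult.left_commute)

lemma lagrangian_partial_scale:
  "lagrangian_partial c E (\<lambda>v. a * z v) i = a ^ (k - 1) * lagrangian_partial c E z i"
  unfolding lagrangian_partial_def sum_distrib_left
  by (intro sum.cong) (simp_all add: prod.distrib card_Diff_singleton uniform mult.left_commute)

lemma lagrangian_euler: "(\<Sum>i\<in>UNIV. z i * lagrangian_partial c E z i) = k * lagrangian c E z"
proof -
  have "(\<Sum>i\<in>UNIV. z i * lagrangian_partial c E z i) =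
      (\<Sum>i\<in>UNIV. \<Sum>e\<in>E. if i \<in> e then c e * (\<Prod>v\<in>e. z v) else 0)"
    unfolding lagrangian_partial_def sum_distrib_left sum.inter_filter[OF finite, symmetric]
    by (intro sum.cong) (auto simp: prod.remove)
  also have "\<dots> = (\<Sum>e\<in>E. \<Sum>i\<in>UNIV. if i \<in> e then c e * (\<Prod>v\<in>e. z v) else 0)"
    by (rule sum.swap)
  also have "\<dots> = k * lagrangian c E z"
    by (simp add: sum.If_cases uniform lagrangian_def sum_distrib_left)
  finally show ?thesis .
qed

lemma lagrangian_le_homogeneous:
  assumes "\<And>z. sum_abs_pow k z = 1 \<Longrightarrow> lagrangian c E z \<le> m"
  shows "lagrangian c E z \<le> m * sum_abs_pow k z"
proof (cases "sum_abs_pow k z = 0")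
  case True
  then have "z = (\<lambda>v. 0 * z v)"
    using k_pos by (auto simp: sum_nonneg_eq_0_iff)
  then have "lagrangian c E z = 0"
    using k_pos by (metis lagrangian_scale mult_zero_left zero_power)
  with True show ?thesis
    by simp
next
  case False
  define s where "s = sum_abs_pow k z"
  have "0 < s"
    using False by (simp add: s_def sum_nonneg order_less_le)
  define a where "a = 1 / root k s"
  have "a ^ k = 1 / s" and "0 < a"
    using \<open>0 < s\<close> k_pos by (simp_all add: a_def power_divide)
  then have "sum_abs_pow k (\<lambda>v. a * z v) = 1"
    using \<open>0 < s\<close> by (simp add: sum_abs_pow_scale s_def)
  then have "lagrangian c E z / s \<le> m"
    using assms \<open>a ^ k = 1 / s\<close> by (fastforce simp: lagrangian_scale)
  then show ?thesis
    using \<open>0 < s\<close> by (simp add: s_def pos_divide_le_eq mult.commute)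
qed

lemma lagrangian_maximizer_exists: "\<exists>w. lagrangian_maximizer w"
proof -
  have "continuous_on UNIV (\<lambda>x::real^'a. lagrangian c E (vec_nth x))"
    unfolding lagrangian_def by (intro continuous_intros)
  then obtain w0 where w0: "sum_abs_pow k w0 = 1"
    and w0_max: "\<And>z. sum_abs_pow k z = 1 \<Longrightarrow> lagrangian c E z \<le> lagrangian c E w0"
    using sphere_maximum_exists[OF k_pos] by blast
  define w where "w = (\<lambda>i. \<bar>w0 i\<bar>)"
  have "lagrangian c E w0 \<le> (\<Sum>e\<in>E. \<bar>c e * (\<Prod>v\<in>e. w0 v)\<bar>)"
    unfolding lagrangian_def by (rule order_trans[OF abs_ge_self sum_abs])
  also have "\<dots> = lagrangian c E w"
    unfolding lagrangian_def w_def
    by (intro sum.cong) (simp_all add: abs_mult abs_prod abs_of_pos weight_pos)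
  finally have "\<And>z. sum_abs_pow k z = 1 \<Longrightarrow> lagrangian c E z \<le> lagrangian c E w"
    using w0_max by fastforce
  then have "lagrangian_maximizer w"
    using w0 lagrangian_le_homogeneous unfolding lagrangian_maximizer_def w_def by auto
  then show ?thesis
    by blast
qed

text \<open>Raising the vanishing coordinates \<open>A\<close> of an edge to \<open>t\<close> gains order \<open>t ^ card A\<close> in
  the Lagrangian but costs only order \<open>t ^ k\<close> in the norm: this is why maximisers are positive.\<close>

lemma lagrangian_maximizer_perturb:
  assumes "lagrangian_maximizer w" and "e \<in> E" and "0 < t"
    and A_def: "A = {v\<in>e. w v = 0}" and "A \<noteq> {}"
  shows "t ^ card A * (c e * (\<Prod>v\<in>e - A. w v)) \<le> lagrangian c E w * card A * t ^ k"
proof -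
  have w_nonneg: "\<And>v. 0 \<le> w v" and w_norm: "sum_abs_pow k w = 1"
    and w_max: "\<And>z. lagrangian c E z \<le> lagrangian c E w * sum_abs_pow k z"
    using assms(1) unfolding lagrangian_maximizer_def by auto
  define z where "z = (\<lambda>v. if v \<in> A then t else w v)"
  have "\<bar>z v\<bar> ^ k = \<bar>w v\<bar> ^ k + (if v \<in> A then t ^ k else 0)" for v
    using \<open>0 < t\<close> k_pos by (auto simp: z_def A_def)
  then have "sum_abs_pow k z = 1 + card A * t ^ k"
    using w_norm by (simp add: sum.distrib sum.If_cases Int_absorb1)
  have "A \<subseteq> e"
    using A_def by blast
  have "(\<Prod>v\<in>e. w v) = 0"
    using \<open>A \<noteq> {}\<close> A_def by (auto intro: prod_zero)
  then have Lw: "lagrangian c E w = (\<Sum>e'\<in>E - {e}. c e' * (\<Prod>v\<in>e'. w v))"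
    unfolding lagrangian_def using \<open>e \<in> E\<close> by (simp add: sum.remove)
  have "(\<Prod>v\<in>e. z v) = t ^ card A * (\<Prod>v\<in>e - A. w v)"
    using prod.Int_Diff[of e z A] by (simp add: z_def Int_absorb1[OF \<open>A \<subseteq> e\<close>])
  then have Lz: "lagrangian c E z =
      t ^ card A * (c e * (\<Prod>v\<in>e - A. w v)) + (\<Sum>e'\<in>E - {e}. c e' * (\<Prod>v\<in>e'. z v))"
    unfolding lagrangian_def using \<open>e \<in> E\<close> by (simp add: sum.remove mult.left_commute)
  have "(\<Sum>e'\<in>E - {e}. c e' * (\<Prod>v\<in>e'. w v)) \<le> (\<Sum>e'\<in>E - {e}. c e' * (\<Prod>v\<in>e'. z v))"
    using w_nonneg \<open>0 < t\<close> by (intro sum_mono mult_left_mono prod_mono) (auto simp: z_def A_def weight_nonneg)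
  then have "lagrangian c E w + t ^ card A * (c e * (\<Prod>v\<in>e - A. w v)) \<le> lagrangian c E z"
    unfolding Lw Lz by linarith
  also have "\<dots> \<le> lagrangian c E w * (1 + card A * t ^ k)"
    using w_max \<open>sum_abs_pow k z = 1 + card A * t ^ k\<close> by metis
  finally show ?thesis
    by (simp add: algebra_simps)
qed

lemma lagrangian_maximizer_pos:
  assumes "lagrangian_maximizer w"
  shows "0 < w i"
proof (rule ccontr)
  have w_nonneg: "\<And>v. 0 \<le> w v" and w_norm: "sum_abs_pow k w = 1"
    using assms unfolding lagrangian_maximizer_def by auto
  define Z where "Z = {v. w v = 0}"
  assume "\<not> 0 < w i"
  then have "Z \<noteq> {}"
    using w_nonneg[of i] by (auto simp: Z_def)
  moreover have "Z \<noteq> UNIV"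
  proof
    assume "Z = UNIV"
    then have "\<And>v. w v = 0"
      by (auto simp: Z_def)
    with w_norm k_pos show False
      by (simp add: zero_power)
  qed
  ultimately obtain e where "e \<in> E" "e \<inter> Z \<noteq> {}" "\<not> e \<subseteq> Z"
    using hconnectedD[OF connected] by blast
  define A where "A = {v\<in>e. w v = 0}"
  have "A \<noteq> {}" "A \<subset> e"
    using \<open>e \<inter> Z \<noteq> {}\<close> \<open>\<not> e \<subseteq> Z\<close> by (auto simp: A_def Z_def)
  then have "card A < k"
    using uniform[OF \<open>e \<in> E\<close>] psubset_card_mono[of e A] by (auto simp: finite_subset)
  define p where "p = c e * (\<Prod>v\<in>e - A. w v)"
  have "0 < p"
    using w_nonneg weight_pos[OF \<open>e \<in> E\<close>] unfolding p_def A_def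
    by (intro mult_pos_pos prod_pos) (auto simp: order_less_le)
  have "p \<le> lagrangian c E w * card A * t ^ (k - card A)" if "0 < t" for t
  proof -
    have "t ^ k = t ^ card A * t ^ (k - card A)"
      using \<open>card A < k\<close> by (simp add: power_add[symmetric])
    then have "t ^ card A * p \<le> t ^ card A * (lagrangian c E w * card A * t ^ (k - card A))"
      using lagrangian_maximizer_perturb[OF assms \<open>e \<in> E\<close> that A_def \<open>A \<noteq> {}\<close>]
      by (simp add: p_def ac_simps)
    then show ?thesis
      using that by (simp add: mult_le_cancel_left_pos)
  qed
  then have "p \<le> 0"
    using \<open>card A < k\<close> by (intro nonpos_if_le_power[where n = "k - card A"]) auto
  with \<open>0 < p\<close> show False
    by simp
qed

text \<open>Fermat's rule along the \<open>i\<close>-th coordinate: \<open>h\<close> is the slack of the maximality of \<open>w\<close>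
  under the perturbation \<open>w i \<mapsto> w i + t\<close>, so it has a local minimum \<open>0\<close> at \<open>t = 0\<close>.\<close>

lemma lagrangian_maximizer_eigen:
  assumes "lagrangian_maximizer w"
  shows "pos_eigvec (k * lagrangian c E w) w"
proof -
  have w_norm: "sum_abs_pow k w = 1"
    using assms unfolding lagrangian_maximizer_def by blast
  have "lagrangian_partial c E w i = k * lagrangian c E w * w i ^ (k - 1)" for i
  proof -
    define m where "m = lagrangian c E w"
    define a where "a = w i"
    define N where "N = lagrangian_partial c E w i"
    have "0 < a"
      using lagrangian_maximizer_pos[OF assms] by (simp add: a_def)
    define h where "h t = m * (1 - a ^ k + (a + t) ^ k) - (m + t * N)" for t
    have "(h has_real_derivative m * (k * a ^ (k - 1)) - N) (at 0)"
      unfolding h_def by (auto intro!: derivative_eq_intros)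
    moreover have "h 0 \<le> h t" if "\<bar>0 - t\<bar> < a" for t
    proof -
      have "lagrangian c E (w(i := a + t)) \<le> m * sum_abs_pow k (w(i := a + t))"
        using assms unfolding lagrangian_maximizer_def m_def by blast
      moreover have "sum_abs_pow k (w(i := a + t)) = 1 - \<bar>a\<bar> ^ k + \<bar>a + t\<bar> ^ k"
        using sum_abs_pow_upd[where k = k and z = w and i = i and a = "a + t"] w_norm
        unfolding a_def by simp
      moreover have "\<bar>a\<bar> = a" "\<bar>a + t\<bar> = a + t"
        using that \<open>0 < a\<close> by auto
      ultimately show ?thesis
        by (simp add: h_def lagrangian_upd a_def m_def N_def)
    qed
    ultimately have "m * (k * a ^ (k - 1)) - N = 0"
      using \<open>0 < a\<close> by (intro DERIV_local_min) auto
    then show ?thesis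
      by (simp add: m_def a_def N_def ac_simps)
  qed
  with lagrangian_maximizer_pos[OF assms] show ?thesis
    by (simp add: pos_eigvec_def)
qed

lemma scaled_eigvec_eq_on_edge:
  assumes y: "pos_eigvec \<rho> y" and y': "pos_eigvec \<rho> y'"
    and "0 < a" and a_le: "\<And>v. a * y v \<le> y' v"
    and "e \<in> E" and "i \<in> e" and "y' i = a * y i" and "j \<in> e"
  shows "y' j = a * y j"
proof (cases "j = i")
  case False
  have y_pos: "\<And>v. 0 < y v" and y'_pos: "\<And>v. 0 < y' v"
    using y y' by (auto simp: pos_eigvec_def)
  let ?t = "\<lambda>y e. c e * (\<Prod>v\<in>e - {i}. y v)"
  have t_le: "?t (\<lambda>v. a * y v) e' \<le> ?t y' e'" if "e' \<in> E" for e'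
    using that y_pos \<open>0 < a\<close> a_le
    by (intro mult_left_mono prod_mono) (auto simp: weight_nonneg less_imp_le)
  have "lagrangian_partial c E (\<lambda>v. a * y v) i = lagrangian_partial c E y' i"
    using y y' \<open>y' i = a * y i\<close>
    by (simp add: lagrangian_partial_scale pos_eigvec_def power_mult_distrib)
  then have sum_eq: "(\<Sum>e'\<in>{e\<in>E. i \<in> e}. ?t (\<lambda>v. a * y v) e') = (\<Sum>e'\<in>{e\<in>E. i \<in> e}. ?t y' e')"
    unfolding lagrangian_partial_def .
  have "\<not> ?t (\<lambda>v. a * y v) e < ?t y' e"
  proof
    assume "?t (\<lambda>v. a * y v) e < ?t y' e"
    then have "(\<Sum>e'\<in>{e\<in>E. i \<in> e}. ?t (\<lambda>v. a * y v) e') < (\<Sum>e'\<in>{e\<in>E. i \<in> e}. ?t y' e')"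
      using t_le \<open>e \<in> E\<close> \<open>i \<in> e\<close> by (intro sum_strict_mono_ex1) auto
    with sum_eq show False
      by simp
  qed
  with t_le[OF \<open>e \<in> E\<close>] weight_pos[OF \<open>e \<in> E\<close>]
  have prod_eq: "(\<Prod>v\<in>e - {i}. a * y v) = (\<Prod>v\<in>e - {i}. y' v)"
    by simp
  show ?thesis
  proof (rule ccontr)
    assume "y' j \<noteq> a * y j"
    with a_le[of j] have "a * y j < y' j"
      by simp
    then have "(\<Prod>v\<in>e - {i}. a * y v) < (\<Prod>v\<in>e - {i}. y' v)"
      using False \<open>j \<in> e\<close> y_pos y'_pos \<open>0 < a\<close> a_le
      by (intro prod_mono_strict[of j]) (auto simp: less_imp_le)
    with prod_eq show False
      by simp
  qed
qed (use \<open>y' i = a * y i\<close> in simp)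

lemma pos_eigvec_unique:
  assumes y: "pos_eigvec \<rho> y" and y': "pos_eigvec \<rho> y'"
    and "sum_abs_pow k y = 1" and "sum_abs_pow k y' = 1"
  shows "y' = y"
proof -
  have y_pos: "\<And>i. 0 < y i" and y'_pos: "\<And>i. 0 < y' i"
    using y y' by (auto simp: pos_eigvec_def)
  obtain i0 where i0: "\<And>j. y' i0 / y i0 \<le> y' j / y j"
    using ex_argmin[of "\<lambda>j. y' j / y j"] by blast
  define a where "a = y' i0 / y i0"
  have "0 < a"
    using y_pos y'_pos by (simp add: a_def)
  have a_le: "a * y j \<le> y' j" for j
    using i0[of j] y_pos[of j] by (simp add: a_def pos_le_divide_eq)
  define M where "M = {j. y' j = a * y j}"
  have "e \<subseteq> M" if "e \<in> E" and "e \<inter> M \<noteq> {}" for e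
    using that scaled_eigvec_eq_on_edge[OF y y' \<open>0 < a\<close> a_le \<open>e \<in> E\<close>] by (auto simp: M_def)
  moreover have "i0 \<in> M"
    using y_pos[of i0] by (simp add: M_def a_def)
  ultimately have "M = UNIV"
    using hconnectedD[OF connected] by blast
  then have y'_eq: "y' = (\<lambda>v. a * y v)"
    by (auto simp: M_def)
  then have "a ^ k = 1"
    using assms(3,4) \<open>0 < a\<close> by (simp add: sum_abs_pow_scale)
  then have "a = 1"
    using \<open>0 < a\<close> k_pos power_eq_iff_eq_base[of k a 1] by simp
  with y'_eq show ?thesis
    by simp
qed

lemma ratio_argmin_subsolution:
  assumes "pos_eigvec \<rho> y" and z_pos: "\<And>i. 0 < z i"
  shows "\<exists>i. (\<forall>j. y i / z i \<le> y j / z j) \<and> lagrangian_partial c E z i \<le> \<rho> * z i ^ (k - 1)"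
proof -
  obtain i where i: "\<And>j. y i / z i \<le> y j / z j"
    using ex_argmin[of "\<lambda>j. y j / z j"] by blast
  define a where "a = y i / z i"
  have "0 < a"
    using assms by (simp add: a_def pos_eigvec_def)
  have "y i = a * z i"
    using z_pos[of i] by (simp add: a_def)
  have "a * z j \<le> y j" for j
    using i[of j] z_pos[of j] by (simp add: a_def pos_le_divide_eq)
  then have "a ^ (k - 1) * lagrangian_partial c E z i \<le> lagrangian_partial c E y i"
    unfolding lagrangian_partial_scale[symmetric] using \<open>0 < a\<close> z_pos
    by (intro lagrangian_partial_mono) (auto simp: weight_nonneg less_imp_le)
  also have "\<dots> = a ^ (k - 1) * (\<rho> * z i ^ (k - 1))"
    using assms by (simp add: pos_eigvec_def \<open>y i = a * z i\<close> power_mult_distrib)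
  finally have "lagrangian_partial c E z i \<le> \<rho> * z i ^ (k - 1)"
    using \<open>0 < a\<close> by simp
  with i show ?thesis
    by blast
qed

lemma ratio_argmax_supersolution:
  assumes "pos_eigvec \<rho> y" and z_pos: "\<And>i. 0 < z i"
  shows "\<exists>i. (\<forall>j. y j / z j \<le> y i / z i) \<and> \<rho> * z i ^ (k - 1) \<le> lagrangian_partial c E z i"
proof -
  obtain i where i: "\<And>j. y j / z j \<le> y i / z i"
    using ex_argmax[of "\<lambda>j. y j / z j"] by blast
  define a where "a = y i / z i"
  have "0 < a"
    using assms by (simp add: a_def pos_eigvec_def)
  have "y i = a * z i"
    using z_pos[of i] by (simp add: a_def)
  have "y j \<le> a * z j" for j
    using i[of j] z_pos[of j] by (simp add: a_def pos_divide_le_eq mult.commute)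
  then have "lagrangian_partial c E y i \<le> a ^ (k - 1) * lagrangian_partial c E z i"
    unfolding lagrangian_partial_scale[symmetric] using assms
    by (intro lagrangian_partial_mono) (auto simp: weight_nonneg pos_eigvec_def less_imp_le)
  moreover have "lagrangian_partial c E y i = a ^ (k - 1) * (\<rho> * z i ^ (k - 1))"
    using assms by (simp add: pos_eigvec_def \<open>y i = a * z i\<close> power_mult_distrib)
  ultimately have "\<rho> * z i ^ (k - 1) \<le> lagrangian_partial c E z i"
    using \<open>0 < a\<close> by simp
  with i show ?thesis
    by blast
qed

lemma pos_eigvec_eigenvalue_less:
  assumes "pos_eigvec \<rho> y" and "\<And>i. 0 < w i" and "\<And>i. lagrangian_partial c E w i < r * w i ^ (k - 1)"
  shows "\<rho> < r"
proof -
  obtain i where "\<rho> * w i ^ (k - 1) \<le> lagrangian_partial c E w i"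
    using ratio_argmax_supersolution[where z = w, OF assms(1,2)] by blast
  with assms(3)[of i] have "\<rho> * w i ^ (k - 1) < r * w i ^ (k - 1)"
    by linarith
  with assms(2)[of i] show ?thesis
    by (simp add: mult_less_cancel_right)
qed

lemma pos_eigvec_less:
  assumes y: "pos_eigvec \<rho> y"
    and "\<And>i. 0 < w i" and "\<And>i. lagrangian_partial c E w i < r * w i ^ (k - 1)"
    and z_pos: "\<And>i. 0 < z i" and z_super: "\<And>i. i \<noteq> a \<Longrightarrow> r * z i ^ (k - 1) \<le> lagrangian_partial c E z i"
    and "z a < z b"
  shows "y a < y b"
proof -
  have "\<rho> < r"
    using pos_eigvec_eigenvalue_less[OF y assms(2,3)] .
  obtain i where i: "\<And>j. y i / z i \<le> y j / z j" and "lagrangian_partial c E z i \<le> \<rho> * z i ^ (k - 1)"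
    using ratio_argmin_subsolution[where z = z, OF y z_pos] by blast
  have "i = a"
  proof (rule ccontr)
    assume "i \<noteq> a"
    then have "r * z i ^ (k - 1) \<le> \<rho> * z i ^ (k - 1)"
      using z_super \<open>lagrangian_partial c E z i \<le> \<rho> * z i ^ (k - 1)\<close> by fastforce
    with \<open>\<rho> < r\<close> z_pos[of i] show False
      by simp
  qed
  with i[of b] have "y a / z a \<le> y b / z b"
    by simp
  moreover have "y b / z b < y b / z a"
    using y z_pos \<open>z a < z b\<close> by (simp add: pos_eigvec_def frac_less2)
  ultimately have "y a / z a < y b / z a"
    by linarith
  then show ?thesis
    using z_pos[of a] by (simp add: divide_less_cancel)
qed

end

section \<open>The principal eigenvectors of a hypergraph and of its clique-shadow\<close>

lemma hyp_rho_eq: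
  assumes "weighted_hypergraph k E (\<lambda>_. 1)"
    and "weighted_hypergraph.lagrangian_maximizer k E (\<lambda>_. 1) w"
  shows "hyp_rho k E = k * lagrangian (\<lambda>_. 1) E w"
  unfolding hyp_rho_def
proof (rule cSup_eq_maximum)
  have L_eq: "lagrangian (\<lambda>_. 1) E z = (\<Sum>e\<in>E. \<Prod>v\<in>e. z v)" for z
    by (simp add: lagrangian_def)
  have w_norm: "sum_abs_pow k w = 1"
    and w_max: "\<And>z. lagrangian (\<lambda>_. 1) E z \<le> lagrangian (\<lambda>_. 1) E w * sum_abs_pow k z"
    using assms unfolding weighted_hypergraph.lagrangian_maximizer_def[OF assms(1)] by auto
  show "real k * lagrangian (\<lambda>_. 1) E w \<in> {real k * (\<Sum>e\<in>E. \<Prod>v\<in>e. z v) |z. sum_abs_pow k z = 1}"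
    using w_norm by (auto simp: L_eq)
  fix x
  assume "x \<in> {real k * (\<Sum>e\<in>E. \<Prod>v\<in>e. z v) |z. sum_abs_pow k z = 1}"
  then obtain z where "x = real k * lagrangian (\<lambda>_. 1) E z" and "sum_abs_pow k z = 1"
    by (auto simp: L_eq)
  with w_max[of z] show "x \<le> real k * lagrangian (\<lambda>_. 1) E w"
    by (simp add: mult_left_mono)
qed

lemma hyp_evec_pos_eigvec:
  assumes "weighted_hypergraph k E (\<lambda>_. 1)"
  shows "weighted_hypergraph.pos_eigvec k E (\<lambda>_. 1) (hyp_rho k E) (hyp_evec k E)"
proof -
  interpret H: weighted_hypergraph k E "\<lambda>_. 1"
    by (fact assms)
  obtain w where w: "H.lagrangian_maximizer w"
    using H.lagrangian_maximizer_exists by blast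
  then have w_norm: "sum_abs_pow k w = 1"
    unfolding H.lagrangian_maximizer_def by blast
  have w_eig: "H.pos_eigvec (hyp_rho k E) w"
    using H.lagrangian_maximizer_eigen[OF w] hyp_rho_eq[OF assms w] by simp
  have "hyp_evec k E = w"
    unfolding hyp_evec_def
  proof (rule the_equality)
    show "(\<forall>i. 0 < w i) \<and> sum_abs_pow k w = 1 \<and>
        (\<forall>i. hyp_rho k E * w i ^ (k - 1) = (\<Sum>e\<in>{e\<in>E. i \<in> e}. \<Prod>v\<in>e - {i}. w v))"
      using w_eig w_norm by (simp add: H.pos_eigvec_def lagrangian_partial_def)
    fix y
    assume "(\<forall>i. 0 < y i) \<and> sum_abs_pow k y = 1 \<and>
        (\<forall>i. hyp_rho k E * y i ^ (k - 1) = (\<Sum>e\<in>{e\<in>E. i \<in> e}. \<Prod>v\<in>e - {i}. y v))"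
    then have "H.pos_eigvec (hyp_rho k E) y" and "sum_abs_pow k y = 1"
      by (simp_all add: H.pos_eigvec_def lagrangian_partial_def)
    then show "y = w"
      using H.pos_eigvec_unique[OF w_eig _ w_norm] by blast
  qed
  with w_eig show ?thesis
    by simp
qed

text \<open>The clique-shadow is encoded as the \<open>2\<close>-uniform hypergraph of pairs covered by an edge,
  each pair weighted by its multiplicity; the partial derivatives of its Lagrangian are then the
  rows of the adjacency matrix of the multigraph (\<open>shadow_adj_mult\<close>).\<close>

definition shadow_edges :: "'a set set \<Rightarrow> 'a set set" where
  "shadow_edges E = {p. card p = 2 \<and> (\<exists>e\<in>E. p \<subseteq> e)}"

definition shadow_mult :: "'a set set \<Rightarrow> 'a set \<Rightarrow> real" where
  "shadow_mult E p = real (card {e\<in>E. p \<subseteq> e})"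

lemma shadow_weighted_hypergraph:
  fixes E :: "'a::finite set set"
  assumes "hconnected E"
  shows "weighted_hypergraph 2 (shadow_edges E) (shadow_mult E)"
proof
  show "0 < shadow_mult E p" if "p \<in> shadow_edges E" for p
    using that by (auto simp: shadow_mult_def shadow_edges_def card_gt_0_iff)
  show "hconnected (shadow_edges E)"
    unfolding hconnected_def
  proof (intro allI impI)
    fix Z :: "'a set"
    assume "Z \<noteq> {} \<and> (\<forall>p\<in>shadow_edges E. p \<inter> Z \<noteq> {} \<longrightarrow> p \<subseteq> Z)"
    then have "Z \<noteq> {}" and closed: "\<And>p. p \<in> shadow_edges E \<Longrightarrow> p \<inter> Z \<noteq> {} \<Longrightarrow> p \<subseteq> Z"
      by auto
    have "e \<subseteq> Z" if "e \<in> E" and "u \<in> e \<inter> Z" for e u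
    proof
      fix v
      assume "v \<in> e"
      show "v \<in> Z"
      proof (cases "v = u")
        case False
        with \<open>v \<in> e\<close> that have "{u, v} \<in> shadow_edges E"
          by (auto simp: shadow_edges_def)
        with closed that show ?thesis
          by blast
      qed (use that in blast)
    qed
    then show "Z = UNIV"
      using hconnectedD[OF assms \<open>Z \<noteq> {}\<close>] by blast
  qed
qed (auto simp: shadow_edges_def)

lemma shadow_adj_mult:
  fixes E :: "'a::finite set set"
  shows "(\<Sum>j\<in>UNIV. shadow_adj E i j * x j) = lagrangian_partial (shadow_mult E) (shadow_edges E) x i"
proof -
  define J where "J = {j. j \<noteq> i \<and> (\<exists>e\<in>E. i \<in> e \<and> j \<in> e)}"
  have "shadow_adj E i j = 0" if "j \<notin> J" for j
    using that by (auto simp: shadow_adj_def J_def)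
  then have "(\<Sum>j\<in>UNIV. shadow_adj E i j * x j) = (\<Sum>j\<in>J. shadow_adj E i j * x j)"
    by (intro sum.mono_neutral_right) auto
  also have "\<dots> = (\<Sum>j\<in>J. shadow_mult E {i, j} * (\<Prod>v\<in>{i, j} - {i}. x v))"
    by (intro sum.cong) (auto simp: J_def shadow_adj_def shadow_mult_def)
  also have "\<dots> = (\<Sum>p\<in>(\<lambda>j. {i, j}) ` J. shadow_mult E p * (\<Prod>v\<in>p - {i}. x v))"
    by (subst sum.reindex) (auto simp: inj_on_def doubleton_eq_iff)
  also have "(\<lambda>j. {i, j}) ` J = {p\<in>shadow_edges E. i \<in> p}"
  proof (intro equalityI subsetI)
    fix p
    assume "p \<in> {p\<in>shadow_edges E. i \<in> p}"
    then obtain e where "card p = 2" "i \<in> p" "e \<in> E" "p \<subseteq> e"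
      by (auto simp: shadow_edges_def)
    then have "card (p - {i}) = 1"
      by simp
    then obtain j where "p - {i} = {j}"
      by (rule card_1_singletonE)
    with \<open>i \<in> p\<close> \<open>e \<in> E\<close> \<open>p \<subseteq> e\<close> have "p = {i, j}" and "j \<in> J"
      by (auto simp: J_def)
    then show "p \<in> (\<lambda>j. {i, j}) ` J"
      by blast
  qed (auto simp: J_def shadow_edges_def)
  finally show ?thesis
    unfolding lagrangian_partial_def .
qed

lemma is_eigenpair_shadow_adj_iff:
  fixes E :: "'a::finite set set"
  shows "is_eigenpair (shadow_adj E) l x \<longleftrightarrow>
    x \<noteq> (\<lambda>_. 0) \<and> (\<forall>i. lagrangian_partial (shadow_mult E) (shadow_edges E) x i = l * x i)"
  by (simp add: is_eigenpair_def shadow_adj_mult)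

lemma perron_root_shadow_adj:
  fixes E :: "'a::finite set set"
  assumes "hconnected E"
    and w: "weighted_hypergraph.lagrangian_maximizer 2 (shadow_edges E) (shadow_mult E) w"
  shows "perron_root (shadow_adj E) = 2 * lagrangian (shadow_mult E) (shadow_edges E) w"
  unfolding perron_root_def
proof (rule Greatest_equality)
  interpret G: weighted_hypergraph 2 "shadow_edges E" "shadow_mult E"
    using assms(1) by (rule shadow_weighted_hypergraph)
  let ?L = "lagrangian (shadow_mult E) (shadow_edges E)"
  have w_eig: "G.pos_eigvec (2 * ?L w) w"
    using G.lagrangian_maximizer_eigen[OF w] by simp
  then have "w \<noteq> (\<lambda>_. 0)"
    unfolding G.pos_eigvec_def by (metis less_irrefl)
  with w_eig show "\<exists>x. is_eigenpair (shadow_adj E) (2 * ?L w) x"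
    by (auto simp: is_eigenpair_shadow_adj_iff G.pos_eigvec_def)
  fix l
  assume "\<exists>x. is_eigenpair (shadow_adj E) l x"
  then obtain x where "x \<noteq> (\<lambda>_. 0)"
    and x_eig: "\<And>i. lagrangian_partial (shadow_mult E) (shadow_edges E) x i = l * x i"
    by (auto simp: is_eigenpair_shadow_adj_iff)
  then obtain i where "x i \<noteq> 0"
    by auto
  then have "0 < sum_abs_pow 2 x"
    by (intro sum_pos2[where i = i]) auto
  have "l * sum_abs_pow 2 x = 2 * ?L x"
    using G.lagrangian_euler[of x]
    by (simp add: x_eig sum_distrib_left power2_eq_square mult.left_commute)
  also have "\<dots> \<le> 2 * ?L w * sum_abs_pow 2 x"
    using w unfolding G.lagrangian_maximizer_def by simp
  finally show "l \<le> 2 * ?L w"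
    using \<open>0 < sum_abs_pow 2 x\<close> by simp
qed

lemma shadow_evec_pos_eigvec:
  fixes E :: "'a::finite set set"
  assumes "hconnected E"
  shows "weighted_hypergraph.pos_eigvec 2 (shadow_edges E) (shadow_mult E)
    (perron_root (shadow_adj E)) (shadow_evec E)"
proof -
  interpret G: weighted_hypergraph 2 "shadow_edges E" "shadow_mult E"
    using assms by (rule shadow_weighted_hypergraph)
  obtain w where w: "G.lagrangian_maximizer w"
    using G.lagrangian_maximizer_exists by blast
  then have w_norm: "sum_abs_pow 2 w = 1"
    unfolding G.lagrangian_maximizer_def by blast
  have w_eig: "G.pos_eigvec (perron_root (shadow_adj E)) w"
    using G.lagrangian_maximizer_eigen[OF w] perron_root_shadow_adj[OF assms w] by simp
  have "shadow_evec E = w"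
    unfolding shadow_evec_def
  proof (rule the_equality)
    have "w \<noteq> (\<lambda>_. 0)"
      using w_eig unfolding G.pos_eigvec_def by (metis less_irrefl)
    with w_eig w_norm
    show "(\<forall>i. 0 < w i) \<and> (\<Sum>i\<in>UNIV. w i ^ 2) = 1 \<and>
        is_eigenpair (shadow_adj E) (perron_root (shadow_adj E)) w"
      by (simp add: is_eigenpair_shadow_adj_iff G.pos_eigvec_def)
    fix x
    assume "(\<forall>i. 0 < x i) \<and> (\<Sum>i\<in>UNIV. x i ^ 2) = 1 \<and>
        is_eigenpair (shadow_adj E) (perron_root (shadow_adj E)) x"
    then have "G.pos_eigvec (perron_root (shadow_adj E)) x" and "sum_abs_pow 2 x = 1"
      by (simp_all add: is_eigenpair_shadow_adj_iff G.pos_eigvec_def)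
    then show "x = w"
      using G.pos_eigvec_unique[OF w_eig _ w_norm] by blast
  qed
  with w_eig show ?thesis
    by simp
qed

lemma opaqueI:
  assumes "hyp_evec k E i < hyp_evec k E j" and "shadow_evec E j \<le> shadow_evec E i"
  shows "opaque k E"
  unfolding opaque_def
proof
  assume "spectral_ranking (hyp_evec k E) = spectral_ranking (shadow_evec E)"
  then have "(i, j) \<in> spectral_ranking (hyp_evec k E)"
    using assms(2) by (simp add: spectral_ranking_def)
  with assms(1) show False
    by (simp add: spectral_ranking_def)
qed

section \<open>The hypergraphs \<open>O\<^sub>R\<close> and \<open>O\<^sub>B\<close>\<close>

lemma lagrangian_partial_list:
  "distinct L \<Longrightarrow>
    lagrangian_partial c (set L) z i = (\<Sum>e\<leftarrow>L. if i \<in> e then c e * (\<Prod>v\<in>e - {i}. z v) else 0)"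
  unfolding lagrangian_partial_def by (simp add: sum.inter_filter sum.distinct_set_conv_list)

lemma shadow_adj_list:
  assumes "distinct L"
  shows "shadow_adj (set L) i j = (if i = j then 0 else real (length (filter (\<lambda>e. i \<in> e \<and> j \<in> e) L)))"
  using distinct_card[OF distinct_filter[OF assms], of "\<lambda>e. i \<in> e \<and> j \<in> e"]
  unfolding shadow_adj_def by simp

lemma O_R_list: "O_R = set [{T,P,Q}, {T,R,S}, {B,Q,R}, {B,P,S}, {U,P,Q}]"
  by (simp add: O_R_def)

lemma O_R_distinct: "distinct [{T,P,Q}, {T,R,S}, {B,Q,R}, {B,P,S}, {U,P,Q}]"
  by (simp add: set_eq_iff) blast

lemma O_B_list: "O_B = set [{T,P,R}, {T,P,S}, {B,P,Q}, {B,R,S}, {U,P,Q}]"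
  by (simp add: O_B_def)

lemma O_B_distinct: "distinct [{T,P,R}, {T,P,S}, {B,P,Q}, {B,R,S}, {U,P,Q}]"
  by (simp add: set_eq_iff) blast

lemma vtx_set_eq_UNIV:
  assumes "T \<in> Z" "B \<in> Z" "P \<in> Z" "Q \<in> Z" "R \<in> Z" "S \<in> Z" "U \<in> Z"
  shows "Z = UNIV"
proof -
  have "x \<in> Z" for x
    using assms by (cases x) simp_all
  then show ?thesis
    by blast
qed

lemma hconnected_O_R: "hconnected O_R"
  unfolding hconnected_def
proof (intro allI impI)
  fix Z :: "vtx set"
  assume "Z \<noteq> {} \<and> (\<forall>e\<in>O_R. e \<inter> Z \<noteq> {} \<longrightarrow> e \<subseteq> Z)"
  then obtain a where "a \<in> Z" and closed: "\<And>e. e \<in> O_R \<Longrightarrow> e \<inter> Z \<noteq> {} \<Longrightarrow> e \<subseteq> Z"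
    by blast
  have "T \<in> Z \<or> P \<in> Z \<or> Q \<in> Z \<Longrightarrow> T \<in> Z \<and> P \<in> Z \<and> Q \<in> Z"
    using closed[of "{T,P,Q}"] by (auto simp: O_R_def)
  moreover have "T \<in> Z \<or> R \<in> Z \<or> S \<in> Z \<Longrightarrow> T \<in> Z \<and> R \<in> Z \<and> S \<in> Z"
    using closed[of "{T,R,S}"] by (auto simp: O_R_def)
  moreover have "B \<in> Z \<or> Q \<in> Z \<or> R \<in> Z \<Longrightarrow> B \<in> Z \<and> Q \<in> Z \<and> R \<in> Z"
    using closed[of "{B,Q,R}"] by (auto simp: O_R_def)
  moreover have "B \<in> Z \<or> P \<in> Z \<or> S \<in> Z \<Longrightarrow> B \<in> Z \<and> P \<in> Z \<and> S \<in> Z"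
    using closed[of "{B,P,S}"] by (auto simp: O_R_def)
  moreover have "U \<in> Z \<or> P \<in> Z \<or> Q \<in> Z \<Longrightarrow> U \<in> Z \<and> P \<in> Z \<and> Q \<in> Z"
    using closed[of "{U,P,Q}"] by (auto simp: O_R_def)
  ultimately have "T \<in> Z \<and> B \<in> Z \<and> P \<in> Z \<and> Q \<in> Z \<and> R \<in> Z \<and> S \<in> Z \<and> U \<in> Z"
    using \<open>a \<in> Z\<close> by (cases a) blast+
  then show "Z = UNIV"
    by (intro vtx_set_eq_UNIV) auto
qed

lemma hconnected_O_B: "hconnected O_B"
  unfolding hconnected_def
proof (intro allI impI)
  fix Z :: "vtx set"
  assume "Z \<noteq> {} \<and> (\<forall>e\<in>O_B. e \<inter> Z \<noteq> {} \<longrightarrow> e \<subseteq> Z)"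
  then obtain a where "a \<in> Z" and closed: "\<And>e. e \<in> O_B \<Longrightarrow> e \<inter> Z \<noteq> {} \<Longrightarrow> e \<subseteq> Z"
    by blast
  have "T \<in> Z \<or> P \<in> Z \<or> R \<in> Z \<Longrightarrow> T \<in> Z \<and> P \<in> Z \<and> R \<in> Z"
    using closed[of "{T,P,R}"] by (auto simp: O_B_def)
  moreover have "T \<in> Z \<or> P \<in> Z \<or> S \<in> Z \<Longrightarrow> T \<in> Z \<and> P \<in> Z \<and> S \<in> Z"
    using closed[of "{T,P,S}"] by (auto simp: O_B_def)
  moreover have "B \<in> Z \<or> P \<in> Z \<or> Q \<in> Z \<Longrightarrow> B \<in> Z \<and> P \<in> Z \<and> Q \<in> Z"
    using closed[of "{B,P,Q}"] by (auto simp: O_B_def)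
  moreover have "B \<in> Z \<or> R \<in> Z \<or> S \<in> Z \<Longrightarrow> B \<in> Z \<and> R \<in> Z \<and> S \<in> Z"
    using closed[of "{B,R,S}"] by (auto simp: O_B_def)
  moreover have "U \<in> Z \<or> P \<in> Z \<or> Q \<in> Z \<Longrightarrow> U \<in> Z \<and> P \<in> Z \<and> Q \<in> Z"
    using closed[of "{U,P,Q}"] by (auto simp: O_B_def)
  ultimately have "T \<in> Z \<and> B \<in> Z \<and> P \<in> Z \<and> Q \<in> Z \<and> R \<in> Z \<and> S \<in> Z \<and> U \<in> Z"
    using \<open>a \<in> Z\<close> by (cases a) blast+
  then show "Z = UNIV"
    by (intro vtx_set_eq_UNIV) auto
qed

lemma O_R_hypergraph: "weighted_hypergraph 3 O_R (\<lambda>_. 1)"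
  using hconnected_O_R by unfold_locales (auto simp: O_R_def)

lemma O_B_hypergraph: "weighted_hypergraph 3 O_B (\<lambda>_. 1)"
  using hconnected_O_B by unfold_locales (auto simp: O_B_def)

lemma lagrangian_partial_O_R:
  "lagrangian_partial (\<lambda>_. 1) O_R y T = y P * y Q + y R * y S"
  "lagrangian_partial (\<lambda>_. 1) O_R y B = y Q * y R + y P * y S"
  "lagrangian_partial (\<lambda>_. 1) O_R y P = y T * y Q + y B * y S + y U * y Q"
  "lagrangian_partial (\<lambda>_. 1) O_R y Q = y T * y P + y B * y R + y U * y P"
  "lagrangian_partial (\<lambda>_. 1) O_R y R = y T * y S + y B * y Q"
  "lagrangian_partial (\<lambda>_. 1) O_R y S = y T * y R + y B * y P"
  "lagrangian_partial (\<lambda>_. 1) O_R y U = y P * y Q"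
  unfolding O_R_list lagrangian_partial_list[OF O_R_distinct] by (simp_all add: insert_Diff_if ac_simps)

lemma lagrangian_partial_O_B:
  "lagrangian_partial (\<lambda>_. 1) O_B y T = y P * y R + y P * y S"
  "lagrangian_partial (\<lambda>_. 1) O_B y B = y P * y Q + y R * y S"
  "lagrangian_partial (\<lambda>_. 1) O_B y P = y T * y R + y T * y S + y B * y Q + y U * y Q"
  "lagrangian_partial (\<lambda>_. 1) O_B y Q = y B * y P + y U * y P"
  "lagrangian_partial (\<lambda>_. 1) O_B y R = y T * y P + y B * y S"
  "lagrangian_partial (\<lambda>_. 1) O_B y S = y T * y P + y B * y R"
  "lagrangian_partial (\<lambda>_. 1) O_B y U = y P * y Q"
  unfolding O_B_list lagrangian_partial_list[OF O_B_distinct] by (simp_all add: insert_Diff_if ac_simps)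

lemma shadow_adj_O_R:
  "(\<Sum>j\<in>UNIV. shadow_adj O_R T j * x j) = x P + x Q + x R + x S"
  "(\<Sum>j\<in>UNIV. shadow_adj O_R B j * x j) = x P + x Q + x R + x S"
  unfolding O_R_list shadow_adj_list[OF O_R_distinct] by (simp_all add: UNIV_vtx)

lemma shadow_adj_O_B:
  "(\<Sum>j\<in>UNIV. shadow_adj O_B T j * x j) = 2 * x P + x R + x S"
  "(\<Sum>j\<in>UNIV. shadow_adj O_B B j * x j) = x P + x Q + x R + x S"
  "(\<Sum>j\<in>UNIV. shadow_adj O_B P j * x j) = 2 * x T + x B + 2 * x Q + x R + x S + x U"
  "(\<Sum>j\<in>UNIV. shadow_adj O_B Q j * x j) = x B + 2 * x P + x U"
  "(\<Sum>j\<in>UNIV. shadow_adj O_B R j * x j) = x T + x B + x P + x S"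
  "(\<Sum>j\<in>UNIV. shadow_adj O_B S j * x j) = x T + x B + x P + x R"
  "(\<Sum>j\<in>UNIV. shadow_adj O_B U j * x j) = x P + x Q"
  unfolding O_B_list shadow_adj_list[OF O_B_distinct] by (simp_all add: UNIV_vtx)

text \<open>The test vectors are rational approximations of the respective principal eigenvector,
  rounded so that the inequalities required by \<open>pos_eigvec_less\<close> hold.\<close>

lemma hyp_evec_O_R: "hyp_evec 3 O_R B < hyp_evec 3 O_R T"
proof (rule weighted_hypergraph.pos_eigvec_less[OF O_R_hypergraph hyp_evec_pos_eigvec[OF O_R_hypergraph],
      where w = "\<lambda>v. case v of T \<Rightarrow> 515968 | B \<Rightarrow> 512058 | P \<Rightarrow> 593835 | Q \<Rightarrow> 593835
        | R \<Rightarrow> 498560 | S \<Rightarrow> 498560 | U \<Rightarrow> 395165"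
      and r = "56457 / 25000"
      and z = "\<lambda>v. case v of T \<Rightarrow> 515949 | B \<Rightarrow> 512058 | P \<Rightarrow> 593815 | Q \<Rightarrow> 593815
        | R \<Rightarrow> 498546 | S \<Rightarrow> 498546 | U \<Rightarrow> 395150"])
qed (auto split: vtx.split simp: lagrangian_partial_O_R)

lemma hyp_evec_O_B: "hyp_evec 3 O_B Q < hyp_evec 3 O_B R"
proof (rule weighted_hypergraph.pos_eigvec_less[OF O_B_hypergraph hyp_evec_pos_eigvec[OF O_B_hypergraph],
      where w = "\<lambda>v. case v of T \<Rightarrow> 536382 | B \<Rightarrow> 502502 | P \<Rightarrow> 651530 | Q \<Rightarrow> 496306
        | R \<Rightarrow> 511626 | S \<Rightarrow> 511626 | U \<Rightarrow> 373557"
      and r = "9269 / 4000"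
      and z = "\<lambda>v. case v of T \<Rightarrow> 536354 | B \<Rightarrow> 502482 | P \<Rightarrow> 651504 | Q \<Rightarrow> 496306
        | R \<Rightarrow> 511600 | S \<Rightarrow> 511600 | U \<Rightarrow> 373548"])
qed (auto split: vtx.split simp: lagrangian_partial_O_B)

lemma shadow_evec_O_B: "shadow_evec O_B R < shadow_evec O_B Q"
proof (rule weighted_hypergraph.pos_eigvec_less[OF shadow_weighted_hypergraph[OF hconnected_O_B]
      shadow_evec_pos_eigvec[OF hconnected_O_B],
      where w = "\<lambda>v. case v of T \<Rightarrow> 387686 | B \<Rightarrow> 341752 | P \<Rightarrow> 572367 | Q \<Rightarrow> 354379
        | R \<Rightarrow> 347549 | S \<Rightarrow> 347549 | U \<Rightarrow> 195282"
      and r = "47457 / 10000"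
      and z = "\<lambda>v. case v of T \<Rightarrow> 387662 | B \<Rightarrow> 341731 | P \<Rightarrow> 572327 | Q \<Rightarrow> 354352
        | R \<Rightarrow> 347549 | S \<Rightarrow> 347528 | U \<Rightarrow> 195266"])
qed (auto split: vtx.split simp: shadow_adj_mult[symmetric] shadow_adj_O_B)

lemma shadow_evec_O_R: "shadow_evec O_R T = shadow_evec O_R B"
proof -
  interpret G: weighted_hypergraph 2 "shadow_edges O_R" "shadow_mult O_R"
    by (rule shadow_weighted_hypergraph[OF hconnected_O_R])
  define x where "x = shadow_evec O_R"
  define l where "l = perron_root (shadow_adj O_R)"
  have x_pos: "\<And>i. 0 < x i" and x_eig: "\<And>i. (\<Sum>j\<in>UNIV. shadow_adj O_R i j * x j) = l * x i"
    using shadow_evec_pos_eigvec[OF hconnected_O_R]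
    by (simp_all add: G.pos_eigvec_def shadow_adj_mult x_def l_def)
  have "l * x T = l * x B"
    using x_eig[of T] x_eig[of B] by (simp add: shadow_adj_O_R)
  moreover have "0 < l * x T"
  proof -
    have "0 < x P + x Q + x R + x S"
      using x_pos by (simp add: add_pos_pos)
    with x_eig[of T] show ?thesis
      by (simp add: shadow_adj_O_R)
  qed
  ultimately show ?thesis
    by (auto simp: x_def)
qed

theorem theorem5p1:
  shows "opaque 3 O_R \<and> opaque 3 O_B"
  using opaqueI[OF hyp_evec_O_R] shadow_evec_O_R opaqueI[OF hyp_evec_O_B] shadow_evec_O_B
  by simp

end
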